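(* Let $K$ be an oriented Legendrian knot with rotation number $r=rot(K)$, let $T(K)$ be its underlying topological knot, and let $(X,\ast,u,u^{-1})$ be a finite GL-quandle. Then $$\operatorname{Col}_X\bigl(S_{-\operatorname{sgn}(r)}^{|r|}(K)\bigr)=\operatorname{Col}_X\bigl(T(K)\bigr),$$ where $S_{-\operatorname{sgn}(r)}^{|r|}(K)$ denotes $|r|$ negative stabilizations of $K$ if $r>0$, $|r|$ positive stabilizations if $r<0$, and $K$ itself if $r=0$.
   Context: A rack is a set $X$ with a binary operation $\ast$ such that for every $y\in X$ the map $x\mapsto x\ast y$ is a bijection of $X$ and $(x\ast y)\ast z=(x\ast z)\ast(y\ast z)$ for all $x,y,z$; it is a quandle if also $x\ast x=x$. A GL-rack is a quadruple $(X,\ast,u,d)$ where $(X,\ast)$ is a rack and $u,d\colon X\to X$ are maps such that for all $x,y\in X$: $u(d(x\ast x))=d(u(x\ast x))=x$; $u(x\ast y)=u(x)\ast y$ and $d(x\ast y)=d(x)\ast y$; $x\ast u(y)=x\ast d(y)=x\ast y$. A GL-quandle is a GL-rack with $x\ast x=x$ for all $x$ (then $d=u^{-1}$). Legendrian knots lie in $(\mathbb{R}^3,\xi_{\mathrm{std}})$, $\xi_{\mathrm{std}}=\mathrm{span}\{\partial_y,\partial_x+y\partial_z\}$, and are represented by oriented front diagrams. For a front diagram $D$ with $u(D)$ cusps traversed upward and $d(D)$ traversed downward, $rot(K)=\frac12(d(D)-u(D))$. Positive/negative stabilization $S_\pm$ (inserting a zigzag) changes $rot$ by $\pm1$. Given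 a finite GL-rack $X$, a coloring of $D$ is an assignment of elements of $X$ to the semi-arcs of $D$ (segments bounded by undercrossings or cusps) such that, following the orientation through a cusp, the color changes from $x$ to $u(x)$ if the cusp is traversed upward and to $d(x)$ if traversed downward; and at each crossing whose over-strand is colored $y$, if the under semi-arc on the right of the oriented over-strand is colored $x$, the one on its left is colored $x\ast y$. $\operatorname{Col}_X(K)$ is the number of colorings (a Legendrian isotopy invariant). For a topological knot $T$, $\operatorname{Col}_X(T)$ denotes the usual quandle coloring number of $T$ by the quandle $(X,\ast)$: the number of assignments of elements of $X$ to the arcs of an oriented diagram of $T$ such that at each crossing with over-arc colored $y$, the under-arc on the right of the oriented over-arc colored $x$ forces the under-arc on its left to be colored $x\ast y$; equivalently $|\operatorname{Hom}(Q(T),X)|$ for the knot quandle $Q(T)$. *)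

theory Defs
  imports Main
begin

definition rack :: "'a set \<Rightarrow> ('a \<Rightarrow> 'a \<Rightarrow> 'a) \<Rightarrow> bool" where
  "rack X op \<longleftrightarrow>
     (\<forall>x\<in>X. \<forall>y\<in>X. op x y \<in> X) \<and>
     (\<forall>y\<in>X. bij_betw (\<lambda>x. op x y) X X) \<and>
     (\<forall>x\<in>X. \<forall>y\<in>X. \<forall>z\<in>X. op (op x y) z = op (op x z) (op y z))"

definition gl_rack :: "'a set \<Rightarrow> ('a \<Rightarrow> 'a \<Rightarrow> 'a) \<Rightarrow> ('a \<Rightarrow> 'a) \<Rightarrow> ('a \<Rightarrow> 'a) \<Rightarrow> bool" where
  "gl_rack X op u d \<longleftrightarrow>
     rack X op \<and>
     (\<forall>x\<in>X. u x \<in> X) \<and> (\<forall>x\<in>X. d x \<in> X) \<and>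
     (\<forall>x\<in>X. u (d (op x x)) = x \<and> d (u (op x x)) = x) \<and>
     (\<forall>x\<in>X. \<forall>y\<in>X. u (op x y) = op (u x) y \<and> d (op x y) = op (d x) y) \<and>
     (\<forall>x\<in>X. \<forall>y\<in>X. op x (u y) = op x y \<and> op x (d y) = op x y)"

definition gl_quandle :: "'a set \<Rightarrow> ('a \<Rightarrow> 'a \<Rightarrow> 'a) \<Rightarrow> ('a \<Rightarrow> 'a) \<Rightarrow> ('a \<Rightarrow> 'a) \<Rightarrow> bool" where
  "gl_quandle X op u d \<longleftrightarrow> gl_rack X op u d \<and> (\<forall>x\<in>X. op x x = x)"

text \<open>A front diagram with n semi-arcs is a list of n events, read along the
orientation. Semi-arc k runs from event (k-1 mod n) to event k, so event k
separates semi-arc k from semi-arc ((k+1) mod n).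
  FCusp True  : a cusp traversed upward;  FCusp False : a cusp traversed downward.
  FCross j s  : the knot passes under the over-strand, which lies on semi-arc j;
                s = True means the incoming under semi-arc k lies on the right of
                the oriented over-strand (the outgoing one on its left),
                s = False means the incoming one lies on its left.\<close>

datatype fevent = FCusp bool | FCross nat bool

definition n_up :: "fevent list \<Rightarrow> nat" where
  "n_up D = length (filter (\<lambda>e. e = FCusp True) D)"

definition n_down :: "fevent list \<Rightarrow> nat" where
  "n_down D = length (filter (\<lambda>e. e = FCusp False) D)"

definition front_wf :: "fevent list \<Rightarrow> bool" where
  "front_wf D \<longleftrightarrow> D \<noteq> [] \<and> even (n_up D + n_down D) \<and>
     (\<forall>e\<in>set D. \<forall>j s. e = FCross j s \<longrightarrow> j < length D)"

definition rot :: "fevent list \<Rightarrow> int" where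
  "rot D = (int (n_down D) - int (n_up D)) div 2"

definition front_coloring ::
  "'a set \<Rightarrow> ('a \<Rightarrow> 'a \<Rightarrow> 'a) \<Rightarrow> ('a \<Rightarrow> 'a) \<Rightarrow> ('a \<Rightarrow> 'a) \<Rightarrow> fevent list \<Rightarrow> 'a list \<Rightarrow> bool" where
  "front_coloring X op u d D c \<longleftrightarrow>
     length c = length D \<and> set c \<subseteq> X \<and>
     (\<forall>k < length D. let n = length D; a = c ! k; b = c ! ((k + 1) mod n) in
        (case D ! k of
           FCusp True \<Rightarrow> b = u a
         | FCusp False \<Rightarrow> b = d a
         | FCross j True \<Rightarrow> b = op a (c ! j)
         | FCross j False \<Rightarrow> a = op b (c ! j)))"

definition Col_front ::
  "'a set \<Rightarrow> ('a \<Rightarrow> 'a \<Rightarrow> 'a) \<Rightarrow> ('a \<Rightarrow> 'a) \<Rightarrow> ('a \<Rightarrow> 'a) \<Rightarrow> fevent list \<Rightarrow> nat" where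
  "Col_front X op u d D = card {c. front_coloring X op u d D c}"

text \<open>The underlying topological diagram T(K): cusps are smoothed to ordinary
(marked) points of the curve; crossings are kept.\<close>

datatype tevent = TMark | TCross nat bool

fun smooth :: "fevent \<Rightarrow> tevent" where
  "smooth (FCusp _) = TMark"
| "smooth (FCross j s) = TCross j s"

definition underlying :: "fevent list \<Rightarrow> tevent list" where
  "underlying D = map smooth D"

text \<open>Quandle colorings of a (marked) knot diagram: colors on the segments; the
color is unchanged across a marked point (so it is constant on arcs), and the
usual crossing rule holds.\<close>
definition top_coloring ::
  "'a set \<Rightarrow> ('a \<Rightarrow> 'a \<Rightarrow> 'a) \<Rightarrow> tevent list \<Rightarrow> 'a list \<Rightarrow> bool" where
  "top_coloring X op T c \<longleftrightarrow>
     length c = length T \<and> set c \<subseteq> X \<and>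
     (\<forall>k < length T. let n = length T; a = c ! k; b = c ! ((k + 1) mod n) in
        (case T ! k of
           TMark \<Rightarrow> b = a
         | TCross j True \<Rightarrow> b = op a (c ! j)
         | TCross j False \<Rightarrow> a = op b (c ! j)))"

definition Col_top :: "'a set \<Rightarrow> ('a \<Rightarrow> 'a \<Rightarrow> 'a) \<Rightarrow> tevent list \<Rightarrow> nat" where
  "Col_top X op T = card {c. top_coloring X op T c}"

text \<open>Positive stabilization (sigma = 1) adds
two cusps traversed downward (rot increases by 1); negative (sigma = -1) adds two
cusps traversed upward. Semi-arc i is split into i (before the zigzag), i+1
(middle) and i+2 (after); later semi-arcs are shifted by 2. A crossing whose
over-strand lay on semi-arc i is placed before or after the zigzag according to
the choice function 'after' (indexed by the old event position).\<close>

definition remap :: "nat \<Rightarrow> (nat \<Rightarrow> bool) \<Rightarrow> nat \<Rightarrow> nat \<Rightarrow> nat" where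
  "remap i after k j = (if j < i then j else if i < j then j + 2
                        else if after k then i + 2 else i)"

fun remap_event :: "nat \<Rightarrow> (nat \<Rightarrow> bool) \<Rightarrow> nat \<Rightarrow> fevent \<Rightarrow> fevent" where
  "remap_event i after k (FCusp b) = FCusp b"
| "remap_event i after k (FCross j s) = FCross (remap i after k j) s"

definition insert_zigzag :: "int \<Rightarrow> nat \<Rightarrow> (nat \<Rightarrow> bool) \<Rightarrow> fevent list \<Rightarrow> fevent list" where
  "insert_zigzag \<sigma> i after D =
     (let D1 = map (\<lambda>(k, e). remap_event i after k e) (zip [0..<length D] D)
      in take i D1 @ [FCusp (\<sigma> < 0), FCusp (\<sigma> < 0)] @ drop i D1)"

inductive stabs :: "int \<Rightarrow> nat \<Rightarrow> fevent list \<Rightarrow> fevent list \<Rightarrow> bool" where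
  stabs_zero: "stabs \<sigma> 0 D D"
| stabs_step: "stabs \<sigma> m D D1 \<Longrightarrow> i < length D1 \<Longrightarrow>
                 stabs \<sigma> (Suc m) D (insert_zigzag \<sigma> i after D1)"

end

theory Submission
  imports Defs
begin

text \<open>
  In a GL-quandle the map u is a permutation of X with inverse d that commutes with every right
  translation and is invisible as an acting element: (u x) * y = u (x * y) and x * u y = x * y.
  Let l k be the number of upward minus downward cusps met before semi-arc k. Recolouring
  semi-arc k by u^(-l k) turns a front colouring into a colouring that is constant through
  cusps and obeys the same crossing rule, i.e. into a quandle colouring of the underlying knot,
  and back. This is consistent around the knot exactly when it has as many upward as downward
  cusps, i.e. rotation number 0. The |r| stabilizations of sign -sgn r add 2|r| cusps in the
  direction that brings the rotation number to 0, while on the underlying knot they only insert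
  two marked points, which does not change the number of quandle colourings.
\<close>

section \<open>Integer iterates of a permutation\<close>

definition int_iter :: "('a \<Rightarrow> 'a) \<Rightarrow> ('a \<Rightarrow> 'a) \<Rightarrow> int \<Rightarrow> 'a \<Rightarrow> 'a" where
  "int_iter f g n = (if n \<ge> 0 then f ^^ nat n else g ^^ nat (- n))"

locale inverse_maps_on =
  fixes X :: "'a set" and f g :: "'a \<Rightarrow> 'a"
  assumes f_closed: "x \<in> X \<Longrightarrow> f x \<in> X"
    and g_closed: "x \<in> X \<Longrightarrow> g x \<in> X"
    and f_g: "x \<in> X \<Longrightarrow> f (g x) = x"
    and g_f: "x \<in> X \<Longrightarrow> g (f x) = x"
begin

lemma funpow_closed:
  assumes "x \<in> X" shows "(f ^^ k) x \<in> X" and "(g ^^ k) x \<in> X"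
  using assms by (induction k) (auto simp: f_closed g_closed)

lemma int_iter_closed: "x \<in> X \<Longrightarrow> int_iter f g n x \<in> X"
  by (simp add: int_iter_def funpow_closed)

lemma int_iter_succ:
  assumes "x \<in> X" shows "int_iter f g (n + 1) x = f (int_iter f g n x)"
proof (cases "n \<ge> 0")
  case True
  then have "nat (n + 1) = Suc (nat n)" by simp
  with True show ?thesis by (simp add: int_iter_def)
next
  case False
  then have "nat (- n) = Suc (nat (- (n + 1)))" by simp
  with False show ?thesis
    by (simp add: int_iter_def f_g funpow_closed assms)
qed

lemma int_iter_pred:
  assumes "x \<in> X" shows "int_iter f g (n - 1) x = g (int_iter f g n x)"
  using int_iter_succ[OF assms, of "n - 1"] g_f int_iter_closed assms by simp

lemma int_iter_add:
  assumes "x \<in> X" shows "int_iter f g (m + n) x = int_iter f g m (int_iter f g n x)"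
proof (induction m rule: int_induct[where k = 0])
  case base
  show ?case by (simp add: int_iter_def)
next
  case (step1 m)
  then show ?case
    using int_iter_succ[of _ "m + n"] int_iter_succ[of _ m] int_iter_closed assms
    by (simp add: algebra_simps)
next
  case (step2 m)
  then show ?case
    using int_iter_pred[of _ "m + n"] int_iter_pred[of _ m] int_iter_closed assms
    by (simp add: algebra_simps)
qed

lemma int_iter_neg_cancel: "x \<in> X \<Longrightarrow> int_iter f g (- n) (int_iter f g n x) = x"
  using int_iter_add[of x "- n" n] by (simp add: int_iter_def)

lemma int_iter_eq_iff:
  "x \<in> X \<Longrightarrow> y \<in> X \<Longrightarrow> int_iter f g n x = int_iter f g n y \<longleftrightarrow> x = y"
  by (metis int_iter_neg_cancel)

end

locale gl_quandle_on =
  fixes X :: "'a set" and op :: "'a \<Rightarrow> 'a \<Rightarrow> 'a" and u d :: "'a \<Rightarrow> 'a"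
  assumes gl_quandle: "gl_quandle X op u d"
begin

lemma op_closed: "x \<in> X \<Longrightarrow> y \<in> X \<Longrightarrow> op x y \<in> X"
  using gl_quandle unfolding gl_quandle_def gl_rack_def rack_def by blast

sublocale inverse_maps_on X u d
proof
  fix x assume x: "x \<in> X"
  then show "u x \<in> X" and "d x \<in> X"
    using gl_quandle unfolding gl_quandle_def gl_rack_def by blast+
  have "op x x = x" and "u (d (op x x)) = x \<and> d (u (op x x)) = x"
    using gl_quandle x unfolding gl_quandle_def gl_rack_def by blast+
  then show "u (d x) = x" and "d (u x) = x" by simp_all
qed

lemma u_op: "x \<in> X \<Longrightarrow> y \<in> X \<Longrightarrow> u (op x y) = op (u x) y"
  and d_op: "x \<in> X \<Longrightarrow> y \<in> X \<Longrightarrow> d (op x y) = op (d x) y"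
  and op_u: "x \<in> X \<Longrightarrow> y \<in> X \<Longrightarrow> op x (u y) = op x y"
  and op_d: "x \<in> X \<Longrightarrow> y \<in> X \<Longrightarrow> op x (d y) = op x y"
  using gl_quandle unfolding gl_quandle_def gl_rack_def by blast+

lemma op_int_iter_right:
  assumes "x \<in> X" and "y \<in> X" shows "op x (int_iter u d n y) = op x y"
proof (induction n rule: int_induct[where k = 0])
  case base
  show ?case by (simp add: int_iter_def)
next
  case (step1 n)
  then show ?case using assms by (simp add: int_iter_succ int_iter_closed op_u)
next
  case (step2 n)
  then show ?case using assms by (simp add: int_iter_pred int_iter_closed op_d)
qed

lemma int_iter_op:
  assumes "x \<in> X" and "y \<in> X" shows "int_iter u d n (op x y) = op (int_iter u d n x) y"
proof (induction n rule: int_induct[where k = 0])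
  case base
  show ?case by (simp add: int_iter_def)
next
  case (step1 n)
  then show ?case using assms by (simp add: int_iter_succ int_iter_closed op_closed u_op)
next
  case (step2 n)
  then show ?case using assms by (simp add: int_iter_pred int_iter_closed op_closed d_op)
qed

end


section \<open>Fronts with rotation number zero\<close>

definition crossings_wf :: "fevent list \<Rightarrow> bool" where
  "crossings_wf D \<longleftrightarrow> (\<forall>e\<in>set D. \<forall>j s. e = FCross j s \<longrightarrow> j < length D)"

lemma crossings_wfD: "crossings_wf D \<Longrightarrow> k < length D \<Longrightarrow> D ! k = FCross j s \<Longrightarrow> j < length D"
  unfolding crossings_wf_def by (metis nth_mem)

fun cusp_sign :: "fevent \<Rightarrow> int" where
  "cusp_sign (FCusp up) = (if up then 1 else - 1)"
| "cusp_sign (FCross _ _) = 0"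

definition cusp_level :: "fevent list \<Rightarrow> nat \<Rightarrow> int" where
  "cusp_level D k = sum_list (map cusp_sign (take k D))"

lemma sum_list_cusp_sign: "sum_list (map cusp_sign D) = int (n_up D) - int (n_down D)"
proof (induction D)
  case (Cons e D)
  then show ?case by (cases e) (auto simp: n_up_def n_down_def)
qed (simp add: n_up_def n_down_def)

lemma cusp_level_next:
  assumes "n_up D = n_down D" and "k < length D"
  shows "cusp_level D ((k + 1) mod length D) = cusp_level D k + cusp_sign (D ! k)"
proof -
  have "cusp_level D (k + 1) = cusp_level D k + cusp_sign (D ! k)"
    using assms(2) by (simp add: cusp_level_def take_Suc_conv_app_nth)
  moreover have "cusp_level D (length D) = 0"
    using assms(1) sum_list_cusp_sign[of D] by (simp add: cusp_level_def)
  ultimately show ?thesis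
  proof (cases "k + 1 < length D")
    case False
    with assms(2) have "k + 1 = length D" by simp
    with \<open>cusp_level D (k + 1) = cusp_level D k + cusp_sign (D ! k)\<close>
      \<open>cusp_level D (length D) = 0\<close> show ?thesis by (simp add: cusp_level_def)
  qed simp
qed

definition front_cond ::
  "('a \<Rightarrow> 'a \<Rightarrow> 'a) \<Rightarrow> ('a \<Rightarrow> 'a) \<Rightarrow> ('a \<Rightarrow> 'a) \<Rightarrow> fevent list \<Rightarrow> 'a list \<Rightarrow> nat \<Rightarrow> bool" where
  "front_cond op u d D c k \<longleftrightarrow>
     (let n = length D; a = c ! k; b = c ! ((k + 1) mod n) in
        (case D ! k of
           FCusp True \<Rightarrow> b = u a
         | FCusp False \<Rightarrow> b = d a
         | FCross j True \<Rightarrow> b = op a (c ! j)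
         | FCross j False \<Rightarrow> a = op b (c ! j)))"

definition top_cond :: "('a \<Rightarrow> 'a \<Rightarrow> 'a) \<Rightarrow> tevent list \<Rightarrow> 'a list \<Rightarrow> nat \<Rightarrow> bool" where
  "top_cond op T c k \<longleftrightarrow>
     (let n = length T; a = c ! k; b = c ! ((k + 1) mod n) in
        (case T ! k of
           TMark \<Rightarrow> b = a
         | TCross j True \<Rightarrow> b = op a (c ! j)
         | TCross j False \<Rightarrow> a = op b (c ! j)))"

lemma front_coloring_iff:
  "front_coloring X op u d D c \<longleftrightarrow>
     length c = length D \<and> set c \<subseteq> X \<and> (\<forall>k < length D. front_cond op u d D c k)"
  unfolding front_coloring_def front_cond_def ..

lemma top_coloring_iff:
  "top_coloring X op T c \<longleftrightarrow>
     length c = length T \<and> set c \<subseteq> X \<and> (\<forall>k < length T. top_cond op T c k)"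
  unfolding top_coloring_def top_cond_def ..

lemma length_underlying [simp]: "length (underlying D) = length D"
  by (simp add: underlying_def)

lemma nth_underlying: "k < length D \<Longrightarrow> underlying D ! k = smooth (D ! k)"
  by (simp add: underlying_def)

definition level_shift :: "('a \<Rightarrow> 'a) \<Rightarrow> ('a \<Rightarrow> 'a) \<Rightarrow> (nat \<Rightarrow> int) \<Rightarrow> 'a list \<Rightarrow> 'a list" where
  "level_shift f g h c = map (\<lambda>k. int_iter f g (h k) (c ! k)) [0..<length c]"

lemma length_level_shift [simp]: "length (level_shift f g h c) = length c"
  by (simp add: level_shift_def)

lemma nth_level_shift [simp]: "k < length c \<Longrightarrow> level_shift f g h c ! k = int_iter f g (h k) (c ! k)"
  by (simp add: level_shift_def)

context inverse_maps_on
begin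

lemma level_shift_closed: "set c \<subseteq> X \<Longrightarrow> set (level_shift f g h c) \<subseteq> X"
  by (auto simp: level_shift_def intro!: int_iter_closed)

lemma level_shift_neg_cancel:
  "set c \<subseteq> X \<Longrightarrow> level_shift f g (\<lambda>k. - h k) (level_shift f g h c) = c"
  by (auto intro!: nth_equalityI int_iter_neg_cancel simp: subset_code(1))

lemma inj_on_level_shift: "inj_on (level_shift f g h) {c. set c \<subseteq> X}"
  by (metis (mono_tags, lifting) inj_onI level_shift_neg_cancel mem_Collect_eq)

end

context gl_quandle_on
begin

lemma front_cond_level_shift_iff:
  assumes balanced: "n_up D = n_down D" and wf: "crossings_wf D"
    and k: "k < length D" and N: "length N = length D" "set N \<subseteq> X"
  shows "front_cond op u d D (level_shift u d (cusp_level D) N) k \<longleftrightarrow> top_cond op (underlying D) N k"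
proof -
  define c where "c = level_shift u d (cusp_level D) N"
  define k' where "k' = (k + 1) mod length D"
  define l where "l = cusp_level D k"
  have "k' < length D" using k unfolding k'_def by (metis mod_less_divisor gr_zeroI less_zeroE)
  have in_X: "m < length D \<Longrightarrow> N ! m \<in> X" for m
    using N by (auto simp: subset_code(1))
  have c_nth: "m < length D \<Longrightarrow> c ! m = int_iter u d (cusp_level D m) (N ! m)" for m
    using N by (simp add: c_def)
  have ck: "c ! k = int_iter u d l (N ! k)"
    using c_nth k by (simp add: l_def)
  have ck': "c ! k' = int_iter u d (l + cusp_sign (D ! k)) (N ! k')"
    using c_nth \<open>k' < length D\<close> cusp_level_next[OF balanced k] by (simp add: l_def k'_def)
  show ?thesis
  proof (cases "D ! k")
    case (FCusp up)
    then have "top_cond op (underlying D) N k \<longleftrightarrow> N ! k' = N ! k"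
      using k unfolding top_cond_def Let_def length_underlying k'_def[symmetric]
      by (simp add: nth_underlying)
    moreover have "front_cond op u d D c k \<longleftrightarrow> N ! k' = N ! k"
    proof (cases up)
      case True
      have "u (c ! k) = int_iter u d (l + 1) (N ! k)" using ck in_X k by (simp add: int_iter_succ)
      then show ?thesis using FCusp True ck' in_X k \<open>k' < length D\<close>
        unfolding front_cond_def Let_def k'_def[symmetric] by (simp add: int_iter_eq_iff)
    next
      case False
      have "d (c ! k) = int_iter u d (l - 1) (N ! k)" using ck in_X k by (simp add: int_iter_pred)
      then show ?thesis using FCusp False ck' in_X k \<open>k' < length D\<close>
        unfolding front_cond_def Let_def k'_def[symmetric] by (simp add: int_iter_eq_iff)
    qed
    ultimately show ?thesis by (simp add: c_def)
  next
    case (FCross j s)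
    then have "j < length D" using crossings_wfD[OF wf k] by blast
    have ck'': "c ! k' = int_iter u d l (N ! k')" using ck' FCross by simp
    have shift_op: "op (c ! m) (c ! j) = int_iter u d l (op (N ! m) (N ! j))"
      if "c ! m = int_iter u d l (N ! m)" "m < length D" for m
      using that c_nth[OF \<open>j < length D\<close>] in_X \<open>j < length D\<close>
      by (simp add: op_int_iter_right int_iter_op int_iter_closed)
    have "front_cond op u d D c k \<longleftrightarrow> top_cond op (underlying D) N k"
      using FCross k \<open>k' < length D\<close> \<open>j < length D\<close> in_X ck ck''
        shift_op[OF ck k] shift_op[OF ck'' \<open>k' < length D\<close>]
      unfolding front_cond_def top_cond_def Let_def length_underlying k'_def[symmetric]
      by (cases s) (simp_all add: nth_underlying int_iter_eq_iff op_closed)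
    then show ?thesis by (simp add: c_def)
  qed
qed

lemma front_coloring_level_shift_iff:
  assumes "n_up D = n_down D" and "crossings_wf D" and "length N = length D" and "set N \<subseteq> X"
  shows "front_coloring X op u d D (level_shift u d (cusp_level D) N) \<longleftrightarrow>
    top_coloring X op (underlying D) N"
  using assms front_cond_level_shift_iff[OF assms(1,2) _ assms(3,4)] level_shift_closed
  by (simp add: front_coloring_iff top_coloring_iff)

theorem Col_front_balanced:
  assumes "n_up D = n_down D" and "crossings_wf D"
  shows "Col_front X op u d D = Col_top X op (underlying D)"
proof -
  let ?shift = "level_shift u d (cusp_level D)"
  let ?unshift = "level_shift u d (\<lambda>k. - cusp_level D k)"
  have "{c. front_coloring X op u d D c} = ?shift ` {N. top_coloring X op (underlying D) N}"
  proof (intro equalityI subsetI)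
    fix c assume "c \<in> {c. front_coloring X op u d D c}"
    then have c: "front_coloring X op u d D c" "length c = length D" "set c \<subseteq> X"
      by (auto simp: front_coloring_iff)
    have "?shift (?unshift c) = c"
      using level_shift_neg_cancel[OF c(3), of "\<lambda>k. - cusp_level D k"] by simp
    moreover have "top_coloring X op (underlying D) (?unshift c)"
      using front_coloring_level_shift_iff[OF assms, of "?unshift c"] c calculation
      by (simp add: level_shift_closed)
    ultimately show "c \<in> ?shift ` {N. top_coloring X op (underlying D) N}"
      by (metis image_eqI mem_Collect_eq)
  qed (auto simp: top_coloring_iff front_coloring_level_shift_iff[OF assms])
  moreover have "inj_on ?shift {N. top_coloring X op (underlying D) N}"
    by (rule inj_on_subset[OF inj_on_level_shift]) (auto simp: top_coloring_iff)
  ultimately show ?thesis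
    unfolding Col_front_def Col_top_def by (simp add: card_image)
qed

end


section \<open>Stabilizations\<close>

definition remap_events :: "nat \<Rightarrow> (nat \<Rightarrow> bool) \<Rightarrow> fevent list \<Rightarrow> fevent list" where
  "remap_events i after D = map (\<lambda>(k, e). remap_event i after k e) (zip [0..<length D] D)"

lemma length_remap_events [simp]: "length (remap_events i after D) = length D"
  by (simp add: remap_events_def)

lemma nth_remap_events: "k < length D \<Longrightarrow> remap_events i after D ! k = remap_event i after k (D ! k)"
  by (simp add: remap_events_def)

lemma insert_zigzag_eq:
  "insert_zigzag \<sigma> i after D =
     take i (remap_events i after D) @ [FCusp (\<sigma> < 0), FCusp (\<sigma> < 0)] @
     drop i (remap_events i after D)"
  by (simp add: insert_zigzag_def remap_events_def Let_def)

lemma length_insert_zigzag: "i \<le> length D \<Longrightarrow> length (insert_zigzag \<sigma> i after D) = length D + 2"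
  by (simp add: insert_zigzag_eq)

lemma nth_insert_zigzag:
  assumes "i \<le> length D" and "k < length D + 2"
  shows "insert_zigzag \<sigma> i after D ! k =
    (if k < i then remap_event i after k (D ! k)
     else if k < i + 2 then FCusp (\<sigma> < 0)
     else remap_event i after (k - 2) (D ! (k - 2)))"
proof -
  define M where "M = remap_events i after D"
  define c where "c = FCusp (\<sigma> < 0)"
  have zigzag_eq: "insert_zigzag \<sigma> i after D = take i M @ [c, c] @ drop i M"
    by (simp add: insert_zigzag_eq M_def c_def)
  have "length (take i M) = i" using assms(1) by (simp add: M_def)
  consider "k < i" | "k = i \<or> k = i + 1" | "i + 2 \<le> k" by linarith
  then show ?thesis
  proof cases
    case 1
    then show ?thesis using assms by (simp add: zigzag_eq nth_append M_def nth_remap_events)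
  next
    case 2
    then show ?thesis using \<open>length (take i M) = i\<close> by (auto simp: zigzag_eq nth_append c_def)
  next
    case 3
    then have "(take i M @ [c, c] @ drop i M) ! k = drop i M ! (k - 2 - i)"
      using \<open>length (take i M) = i\<close> by (simp add: nth_append)
    also have "\<dots> = M ! (k - 2)" using 3 assms by (simp add: M_def)
    finally show ?thesis using 3 assms by (simp add: zigzag_eq M_def nth_remap_events)
  qed
qed

lemma count_cusps_remap_events:
  "length (filter (\<lambda>e. e = FCusp b) (remap_events i after D)) = length (filter (\<lambda>e. e = FCusp b) D)"
proof -
  have "length (filter (\<lambda>e. e = FCusp b) (map (\<lambda>(k, e). remap_event i after k e) (zip ks D))) =
      length (filter (\<lambda>e. e = FCusp b) D)" if "length ks = length D" for ks
    using that
  proof (induction D arbitrary: ks)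
    case (Cons e D)
    then obtain k ks' where "ks = k # ks'" by (cases ks) auto
    with Cons show ?case by (cases e) auto
  qed simp
  then show ?thesis by (simp add: remap_events_def)
qed

lemma count_cusps_insert_zigzag:
  "length (filter (\<lambda>e. e = FCusp b) (insert_zigzag \<sigma> i after D)) =
     length (filter (\<lambda>e. e = FCusp b) D) + (if b = (\<sigma> < 0) then 2 else 0)"
proof -
  let ?M = "remap_events i after D" and ?P = "\<lambda>e. e = FCusp b"
  have "length (filter ?P (take i ?M)) + length (filter ?P (drop i ?M)) = length (filter ?P ?M)"
    by (metis append_take_drop_id filter_append length_append)
  then have "length (filter ?P (insert_zigzag \<sigma> i after D)) =
      length (filter ?P ?M) + length (filter ?P [FCusp (\<sigma> < 0), FCusp (\<sigma> < 0)])"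
    unfolding insert_zigzag_eq filter_append length_append by linarith
  then show ?thesis by (simp add: count_cusps_remap_events)
qed

lemma n_up_insert_zigzag:
  "n_up (insert_zigzag \<sigma> i after D) = n_up D + (if \<sigma> < 0 then 2 else 0)"
  unfolding n_up_def by (simp add: count_cusps_insert_zigzag)

lemma n_down_insert_zigzag:
  "n_down (insert_zigzag \<sigma> i after D) = n_down D + (if \<sigma> < 0 then 0 else 2)"
  unfolding n_down_def by (simp add: count_cusps_insert_zigzag)

lemma remap_less: "j < n \<Longrightarrow> remap i after k j < n + 2"
  by (simp add: remap_def)

lemma crossings_wf_insert_zigzag:
  assumes "crossings_wf D" and "i \<le> length D"
  shows "crossings_wf (insert_zigzag \<sigma> i after D)"
proof -
  have "j < length D + 2" if "e \<in> set (remap_events i after D)" "e = FCross j s" for e j s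
  proof -
    from that(1) obtain k where "k < length D" "remap_events i after D ! k = e"
      by (auto simp: in_set_conv_nth)
    then have k: "k < length D" "remap_event i after k (D ! k) = FCross j s"
      using that(2) by (simp_all add: nth_remap_events)
    then obtain j0 where "D ! k = FCross j0 s" "j = remap i after k j0"
      by (cases "D ! k") auto
    with crossings_wfD[OF assms(1) k(1)] show ?thesis using remap_less by blast
  qed
  then show ?thesis
    using assms(2) set_take_subset set_drop_subset
    by (fastforce simp: crossings_wf_def length_insert_zigzag insert_zigzag_eq)
qed

text \<open>Semi-arcs i, i + 1 and i + 2 of the stabilized front all lie on semi-arc i of D.\<close>

definition zigzag_old_index :: "nat \<Rightarrow> nat \<Rightarrow> nat" where
  "zigzag_old_index i k = (if k < i then k else if k < i + 2 then i else k - 2)"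

definition zigzag_new_index :: "nat \<Rightarrow> nat \<Rightarrow> nat" where
  "zigzag_new_index i k = (if k < i then k else k + 2)"

definition zigzag_colors :: "nat \<Rightarrow> 'a list \<Rightarrow> 'a list" where
  "zigzag_colors i c = map (\<lambda>k. c ! zigzag_old_index i k) [0..<length c + 2]"

lemma zigzag_old_new_index [simp]: "zigzag_old_index i (zigzag_new_index i k) = k"
  by (simp add: zigzag_old_index_def zigzag_new_index_def)

lemma zigzag_new_old_index: "k \<noteq> i \<Longrightarrow> k \<noteq> i + 1 \<Longrightarrow> zigzag_new_index i (zigzag_old_index i k) = k"
  unfolding zigzag_old_index_def zigzag_new_index_def by auto

lemma zigzag_old_index_remap [simp]: "zigzag_old_index i (remap i after k j) = j"
  by (simp add: zigzag_old_index_def remap_def)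

lemma zigzag_new_index_less: "k < n \<Longrightarrow> zigzag_new_index i k < n + 2"
  by (simp add: zigzag_new_index_def)

lemma zigzag_old_index_less: "i < n \<Longrightarrow> k < n + 2 \<Longrightarrow> zigzag_old_index i k < n"
  by (auto simp: zigzag_old_index_def)

lemma zigzag_old_index_next:
  assumes "i < n" and "k < n"
  shows "zigzag_old_index i ((zigzag_new_index i k + 1) mod (n + 2)) = (k + 1) mod n"
proof (cases "k + 1 < n")
  case True
  then show ?thesis by (simp add: zigzag_new_index_def zigzag_old_index_def)
next
  case False
  with assms have "k + 1 = n" by simp
  with assms show ?thesis by (simp add: zigzag_new_index_def zigzag_old_index_def)
qed

lemma length_zigzag_colors [simp]: "length (zigzag_colors i c) = length c + 2"
  by (simp add: zigzag_colors_def)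

lemma nth_zigzag_colors: "k < length c + 2 \<Longrightarrow> zigzag_colors i c ! k = c ! zigzag_old_index i k"
  by (simp add: zigzag_colors_def del: upt_Suc)

lemma set_zigzag_colors: "i < length c \<Longrightarrow> set (zigzag_colors i c) = set c"
proof
  assume "i < length c"
  then show "set (zigzag_colors i c) \<subseteq> set c"
    by (auto simp: zigzag_colors_def zigzag_old_index_less)
  show "set c \<subseteq> set (zigzag_colors i c)"
  proof
    fix x assume "x \<in> set c"
    then obtain k where "k < length c" "c ! k = x" by (auto simp: in_set_conv_nth)
    then show "x \<in> set (zigzag_colors i c)"
      using nth_zigzag_colors[of "zigzag_new_index i k" c i] zigzag_new_index_less
      by (metis length_zigzag_colors nth_mem zigzag_old_new_index)
  qed
qed

context
  fixes D D' :: "fevent list" and i :: nat and after :: "nat \<Rightarrow> bool" and \<sigma> :: int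
  assumes wf: "crossings_wf D" and i_less: "i < length D"
    and D': "D' = insert_zigzag \<sigma> i after D"
begin

private lemma length_D': "length D' = length D + 2"
  using i_less by (simp add: D' length_insert_zigzag)

lemma underlying_insert_zigzag_new_index:
  "k < length D \<Longrightarrow> underlying D' ! zigzag_new_index i k = smooth (remap_event i after k (D ! k))"
  using i_less zigzag_new_index_less[of k "length D" i]
  by (simp add: D' nth_underlying length_insert_zigzag nth_insert_zigzag zigzag_new_index_def)

lemma underlying_insert_zigzag_cusp: "k = i \<or> k = i + 1 \<Longrightarrow> underlying D' ! k = TMark"
  using i_less by (auto simp: D' nth_underlying length_insert_zigzag nth_insert_zigzag)

lemma top_cond_zigzag_colors:
  assumes k: "k < length D" and c: "length c = length D"
  shows "top_cond op (underlying D') (zigzag_colors i c) (zigzag_new_index i k) \<longleftrightarrow>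
    top_cond op (underlying D) c k"
proof -
  let ?c' = "zigzag_colors i c" and ?k' = "zigzag_new_index i k"
  have at_k: "?c' ! ?k' = c ! k"
    using zigzag_new_index_less[OF k] c by (simp add: nth_zigzag_colors)
  have at_next: "?c' ! ((?k' + 1) mod (length D + 2)) = c ! ((k + 1) mod length D)"
    using zigzag_old_index_next[OF i_less k] c by (simp add: nth_zigzag_colors del: mod_Suc)
  show ?thesis
  proof (cases "D ! k")
    case (FCusp up)
    then show ?thesis
      using k at_k at_next underlying_insert_zigzag_new_index[OF k]
      unfolding top_cond_def Let_def length_underlying length_D'
      by (simp add: nth_underlying)
  next
    case (FCross j s)
    then have "j < length D" using crossings_wfD[OF wf k] by blast
    then have "?c' ! remap i after k j = c ! j"
      using c remap_less by (simp add: nth_zigzag_colors)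
    then show ?thesis
      using FCross k at_k at_next underlying_insert_zigzag_new_index[OF k]
      unfolding top_cond_def Let_def length_underlying length_D'
      by (cases s) (simp_all add: nth_underlying)
  qed
qed

lemma top_cond_zigzag_cusp:
  assumes "k = i \<or> k = i + 1"
  shows "top_cond op (underlying D') c k \<longleftrightarrow> c ! (k + 1) = c ! k"
proof -
  have "(k + 1) mod (length D + 2) = k + 1" using assms i_less by auto
  then show ?thesis using underlying_insert_zigzag_cusp[OF assms]
    unfolding top_cond_def Let_def length_underlying length_D' by simp
qed

lemma top_coloring_zigzag_colors:
  assumes c: "length c = length D"
  shows "top_coloring X op (underlying D') (zigzag_colors i c) \<longleftrightarrow> top_coloring X op (underlying D) c"
proof -
  have "(\<forall>k < length D + 2. top_cond op (underlying D') (zigzag_colors i c) k) \<longleftrightarrow>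
      (\<forall>k < length D. top_cond op (underlying D) c k)"
  proof
    assume "\<forall>k < length D + 2. top_cond op (underlying D') (zigzag_colors i c) k"
    then show "\<forall>k < length D. top_cond op (underlying D) c k"
      using top_cond_zigzag_colors[OF _ c] zigzag_new_index_less by blast
  next
    assume old: "\<forall>k < length D. top_cond op (underlying D) c k"
    show "\<forall>k < length D + 2. top_cond op (underlying D') (zigzag_colors i c) k"
    proof (intro allI impI)
      fix k assume k: "k < length D + 2"
      show "top_cond op (underlying D') (zigzag_colors i c) k"
      proof (cases "k = i \<or> k = i + 1")
        case True
        then show ?thesis
          using i_less c by (auto simp: top_cond_zigzag_cusp nth_zigzag_colors zigzag_old_index_def)
      next
        case False
        have "top_cond op (underlying D') (zigzag_colors i c)
            (zigzag_new_index i (zigzag_old_index i k))"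
          using top_cond_zigzag_colors[OF zigzag_old_index_less[OF i_less k] c] old
            zigzag_old_index_less[OF i_less k] by blast
        then show ?thesis using False by (simp add: zigzag_new_old_index)
      qed
    qed
  qed
  then show ?thesis
    using c i_less set_zigzag_colors[of i c]
    by (simp add: top_coloring_iff length_D')
qed

theorem Col_top_insert_zigzag:
  "Col_top X op (underlying D') = Col_top X op (underlying D)"
proof -
  let ?lift = "zigzag_colors i :: 'a list \<Rightarrow> 'a list"
  have "{a. top_coloring X op (underlying D') a} = ?lift ` {c. top_coloring X op (underlying D) c}"
  proof (intro equalityI subsetI)
    fix a assume "a \<in> {a. top_coloring X op (underlying D') a}"
    then have a: "top_coloring X op (underlying D') a" and len_a: "length a = length D + 2"
      by (auto simp: top_coloring_iff length_D')
    define c where "c = map (\<lambda>k. a ! zigzag_new_index i k) [0..<length D]"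
    have cusp: "a ! (k + 1) = a ! k" if "k = i \<or> k = i + 1" for k
    proof -
      have "top_cond op (underlying D') a k"
        using a that i_less by (auto simp: top_coloring_iff length_D')
      then show ?thesis by (simp add: top_cond_zigzag_cusp[OF that])
    qed
    have "?lift c = a"
    proof (rule nth_equalityI)
      fix k assume "k < length (?lift c)"
      then have k: "k < length D + 2" by (simp add: c_def)
      then have "?lift c ! k = a ! zigzag_new_index i (zigzag_old_index i k)"
        using zigzag_old_index_less[OF i_less k] by (simp add: c_def nth_zigzag_colors)
      also have "\<dots> = a ! k"
      proof (cases "k = i \<or> k = i + 1")
        case True
        then show ?thesis using cusp[of i] cusp[of "i + 1"]
          by (auto simp: zigzag_old_index_def zigzag_new_index_def)
      qed (simp add: zigzag_new_old_index)
      finally show "?lift c ! k = a ! k" .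
    qed (simp add: c_def len_a)
    moreover have "top_coloring X op (underlying D) c"
      using top_coloring_zigzag_colors[of c] a calculation by (simp add: c_def)
    ultimately show "a \<in> ?lift ` {c. top_coloring X op (underlying D) c}" by blast
  next
    fix a assume "a \<in> ?lift ` {c. top_coloring X op (underlying D) c}"
    then obtain c where "top_coloring X op (underlying D) c" "a = ?lift c" by blast
    moreover from this have "length c = length D" by (simp add: top_coloring_iff)
    ultimately show "a \<in> {a. top_coloring X op (underlying D') a}"
      by (simp add: top_coloring_zigzag_colors)
  qed
  moreover have "inj_on ?lift {c. top_coloring X op (underlying D) c}"
  proof (rule inj_onI)
    fix c c' assume "c \<in> {c. top_coloring X op (underlying D) c}"
      and "c' \<in> {c. top_coloring X op (underlying D) c}"
      and eq: "?lift c = ?lift c'"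
    then have len: "length c = length D" "length c' = length D"
      by (auto simp: top_coloring_iff)
    show "c = c'"
    proof (rule nth_equalityI)
      fix k assume "k < length c"
      then show "c ! k = c' ! k"
        using arg_cong[OF eq, of "\<lambda>a. a ! zigzag_new_index i k"] len zigzag_new_index_less
        by (simp add: nth_zigzag_colors)
    qed (simp add: len)
  qed
  ultimately show ?thesis
    unfolding Col_top_def by (simp add: card_image)
qed

end

lemma stabs_crossings_wf: "stabs \<sigma> m D D' \<Longrightarrow> crossings_wf D \<Longrightarrow> crossings_wf D'"
  by (induction rule: stabs.induct) (simp_all add: crossings_wf_insert_zigzag)

lemma stabs_cusp_difference:
  "stabs \<sigma> m D D' \<Longrightarrow>
     int (n_down D') - int (n_up D') =
       int (n_down D) - int (n_up D) + (if \<sigma> < 0 then - 2 else 2) * int m"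
  by (induction rule: stabs.induct) (auto simp: n_up_insert_zigzag n_down_insert_zigzag)

lemma stabs_Col_top:
  "stabs \<sigma> m D D' \<Longrightarrow> crossings_wf D \<Longrightarrow> Col_top X op (underlying D') = Col_top X op (underlying D)"
proof (induction rule: stabs.induct)
  case (stabs_step \<sigma> m D D1 i after)
  then have "crossings_wf D1" using stabs_crossings_wf by blast
  then have "Col_top X op (underlying (insert_zigzag \<sigma> i after D1)) = Col_top X op (underlying D1)"
    using stabs_step.hyps(2) by (rule Col_top_insert_zigzag) (rule refl)
  with stabs_step.IH stabs_step.prems show ?case by simp
qed simp

lemma two_rot_eq: "front_wf D \<Longrightarrow> 2 * rot D = int (n_down D) - int (n_up D)"
  unfolding front_wf_def rot_def by (simp add: even_add even_diff)

theorem theorem5p2: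
  fixes X :: "'a set" and op :: "'a \<Rightarrow> 'a \<Rightarrow> 'a" and u d :: "'a \<Rightarrow> 'a"
    and D D' :: "fevent list"
  assumes "finite X"
    and "gl_quandle X op u d"
    and "front_wf D"
    and "stabs (- sgn (rot D)) (nat \<bar>rot D\<bar>) D D'"
  shows "Col_front X op u d D' = Col_top X op (underlying D)"
proof -
  interpret gl_quandle_on X op u d by (rule gl_quandle_on.intro) fact
  have wf: "crossings_wf D" using assms(3) by (simp add: front_wf_def crossings_wf_def)
  have "n_up D' = n_down D'"
    using stabs_cusp_difference[OF assms(4)] two_rot_eq[OF assms(3)]
    by (auto simp: abs_if split: if_splits)
  then have "Col_front X op u d D' = Col_top X op (underlying D')"
    using Col_front_balanced stabs_crossings_wf[OF assms(4) wf] by blast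
  also have "\<dots> = Col_top X op (underlying D)"
    using stabs_Col_top[OF assms(4) wf] .
  finally show ?thesis .
qed

end
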